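(* Let $p \geq 5$ and let $L$ be the Laplacian of the graph $C_\infty \oplus K_p \oplus C_\infty$. Let $E_K \subset l^2$ be the span of the vectors $e_{-1}-e_{-k}$, $k=2,\ldots,p-2$ (equivalently, the $v \in l^2$ supported on $\{-p+2,\ldots,-1\}$ with entries summing to $0$), and $E_K^\perp$ its orthogonal complement. For $\lambda > 4$ let $\sigma_+ = \sigma_+(\lambda) = \tfrac12[(2-\lambda)+\sqrt{(2-\lambda)^2-4}]$ and $$F_S(\lambda) = (2-\lambda)\sigma_+ - (p-1-\lambda)(2-\lambda) + 2(p-2), \qquad F_A(\lambda) = \sigma_+ - (p+1-\lambda).$$ Then: (i) every eigenvector $v \in l^2 \cap E_K^\perp$ of $L$ with eigenvalue $\lambda > 4$ is either symmetric or antisymmetric; (ii) $\lambda > 4$ is the eigenvalue of a symmetric eigenvector $v \in l^2 \cap E_K^\perp$ of $L$ if and only if $F_S(\lambda) = 0$; (iii) $\lambda > 4$ is the eigenvalue of an antisymmetric eigenvector $v \in l^2 \cap E_K^\perp$ of $L$ if and only if $F_A(\lambda)=0$; (iv) each of the equations $F_A(\lambda)=0$ and $F_S(\lambda)=0$ has exactly one solution in $(p,p+2)$ and no solutions in $(4,p] \cup [p+2,+\infty)$.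
   Context: The graph $C_\infty \oplus K_p \oplus C_\infty$ has vertex set $\mathbb{Z}$; its edges are every pair of distinct vertices in $\{-p+1,\ldots,0\}$, the edges $\{j,j+1\}$ for all $j \leq -p$, and the edges $\{j,j+1\}$ for all $j \geq 0$. $l^2$ is the real Hilbert space of square-summable real sequences indexed by $\mathbb{Z}$, with the standard inner product; $e_j$ is the indicator vector of $j$. The Laplacian acts by $(Lv)_i = \deg(i)\, v_i - \sum_{j \sim i} v_j$. A vector $v$ is symmetric if $v_{-p+1-n} = v_n$ for all integers $n \geq 0$, and antisymmetric if $v_{-p+1-n} = -v_n$ for all integers $n \geq 0$ (i.e. invariant, resp. anti-invariant, under the reflection $j \mapsto -p+1-j$ of the graph). *)

theory Defs
  imports "HOL-Analysis.Analysis"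
begin

definition adj :: "nat \<Rightarrow> int \<Rightarrow> int \<Rightarrow> bool" where
  "adj p i j \<longleftrightarrow>
     (i \<noteq> j \<and> -int p + 1 \<le> i \<and> i \<le> 0 \<and> -int p + 1 \<le> j \<and> j \<le> 0)
   \<or> (\<bar>i - j\<bar> = 1 \<and> min i j \<le> - int p)
   \<or> (\<bar>i - j\<bar> = 1 \<and> min i j \<ge> 0)"

definition deg :: "nat \<Rightarrow> int \<Rightarrow> nat" where
  "deg p i = card {j. adj p i j}"

definition laplacian :: "nat \<Rightarrow> (int \<Rightarrow> real) \<Rightarrow> (int \<Rightarrow> real)" where
  "laplacian p v = (\<lambda>i. real (deg p i) * v i - (\<Sum>j\<in>{j. adj p i j}. v j))"

definition l2 :: "(int \<Rightarrow> real) set" where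
  "l2 = {v. (\<lambda>i. (v i)\<^sup>2) summable_on UNIV}"

definition l2_inner :: "(int \<Rightarrow> real) \<Rightarrow> (int \<Rightarrow> real) \<Rightarrow> real" where
  "l2_inner u v = (\<Sum>\<^sub>\<infinity>i. u i * v i)"

definition E_K :: "nat \<Rightarrow> (int \<Rightarrow> real) set" where
  "E_K p = {v. (\<forall>i. i \<notin> {-int p + 2 .. -1} \<longrightarrow> v i = 0) \<and> (\<Sum>i\<in>{-int p + 2 .. -1}. v i) = 0}"

definition E_K_perp :: "nat \<Rightarrow> (int \<Rightarrow> real) set" where
  "E_K_perp p = {w \<in> l2. \<forall>v\<in>E_K p. l2_inner v w = 0}"

definition is_eigvec :: "nat \<Rightarrow> (int \<Rightarrow> real) \<Rightarrow> real \<Rightarrow> bool" where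
  "is_eigvec p v lam \<longleftrightarrow> v \<in> l2 \<and> v \<noteq> (\<lambda>_. 0) \<and> laplacian p v = (\<lambda>i. lam * v i)"

definition symmetric_vec :: "nat \<Rightarrow> (int \<Rightarrow> real) \<Rightarrow> bool" where
  "symmetric_vec p v \<longleftrightarrow> (\<forall>n\<ge>0. v (- int p + 1 - n) = v n)"

definition antisymmetric_vec :: "nat \<Rightarrow> (int \<Rightarrow> real) \<Rightarrow> bool" where
  "antisymmetric_vec p v \<longleftrightarrow> (\<forall>n\<ge>0. v (- int p + 1 - n) = - v n)"

definition sigma_plus :: "real \<Rightarrow> real" where
  "sigma_plus lam = ((2 - lam) + sqrt ((2 - lam)\<^sup>2 - 4)) / 2"

definition F_S :: "nat \<Rightarrow> real \<Rightarrow> real" where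
  "F_S p lam = (2 - lam) * sigma_plus lam - (real p - 1 - lam) * (2 - lam) + 2 * (real p - 2)"

definition F_A :: "nat \<Rightarrow> real \<Rightarrow> real" where
  "F_A p lam = sigma_plus lam - (real p + 1 - lam)"

end

theory Submission
  imports Defs
begin

text \<open>
  Along each of the two paths an eigenvector with eigenvalue \<open>lam > 4\<close> satisfies the recurrence
  \<open>x (n + 2) + (lam - 2) x (n + 1) + x n = 0\<close>, whose bounded solutions decay geometrically with
  ratio \<open>sigma_plus lam\<close>; orthogonality to \<open>E_K\<close> makes it constant on the clique vertices
  \<open>-p+2, ..., -1\<close>. Hence it is determined by its values \<open>c\<close> and \<open>d\<close> at the attachment vertices
  \<open>0\<close> and \<open>-p+1\<close> and its value \<open>m\<close> on the rest of the clique, and the eigenvalue equations on the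
  clique reduce to \<open>(c - d) F_A = 0\<close>, \<open>(c + d) F_S = 0\<close> and \<open>(2 - lam) m = c + d\<close>. Since \<open>F_A\<close> and
  \<open>F_S\<close> have no common zero, \<open>d = c\<close> or \<open>d = -c\<close>. The zero of \<open>F_A\<close> is explicit,
  \<open>p + 1 + 1 / (p - 1)\<close>; that of \<open>F_S\<close> is where the increasing \<open>sigma_plus\<close> crosses a decreasing
  rational function, and is located by the intermediate value theorem. The reflection
  \<open>j \<mapsto> -p+1-j\<close> is a graph automorphism and reduces the left path to the right one.
\<close>

section \<open>The decaying characteristic root\<close>

lemma sigma_plus_bounds:
  assumes "lam > 4"
  shows "-1 < sigma_plus lam" "sigma_plus lam < 0"
proof -
  define D where "D = (2 - lam)\<^sup>2 - 4"
  have s: "sigma_plus lam = ((2 - lam) + sqrt D) / 2"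
    by (simp add: sigma_plus_def D_def)
  have "sqrt D < lam - 2"
    using assms by (intro real_less_lsqrt) (auto simp: D_def power2_eq_square algebra_simps)
  moreover have "lam - 4 < sqrt D"
    using assms by (intro real_less_rsqrt) (simp add: D_def power2_eq_square algebra_simps)
  ultimately show "-1 < sigma_plus lam" "sigma_plus lam < 0"
    by (auto simp: s)
qed

lemma sigma_plus_root:
  assumes "lam > 4"
  shows "(sigma_plus lam)\<^sup>2 + (lam - 2) * sigma_plus lam + 1 = 0"
proof -
  have "2 * 2 < (lam - 2) * (lam - 2)"
    using assms by (intro mult_strict_mono) auto
  then have "sqrt ((2 - lam)\<^sup>2 - 4) ^ 2 = (2 - lam)\<^sup>2 - 4"
    by (intro real_sqrt_pow2) (simp add: power2_eq_square algebra_simps)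
  then show ?thesis
    unfolding sigma_plus_def by (simp add: power2_eq_square field_simps)
qed

lemma abs_sigma_plus_less_1: "lam > 4 \<Longrightarrow> \<bar>sigma_plus lam\<bar> < 1"
  using sigma_plus_bounds by fastforce

lemma sigma_plus_unique_root:
  assumes "lam > 4" "t > -1" "t\<^sup>2 + (lam - 2) * t + 1 = 0"
  shows "sigma_plus lam = t"
proof -
  have "(t - sigma_plus lam) * (t + sigma_plus lam + lam - 2) = 0"
    using sigma_plus_root[OF assms(1)] assms(3) by (simp add: algebra_simps power2_eq_square)
  moreover have "t + sigma_plus lam + lam - 2 > 0"
    using sigma_plus_bounds[OF assms(1)] assms by linarith
  ultimately show ?thesis by simp
qed

lemma sigma_plus_strict_mono:
  assumes "4 < x" "x < y"
  shows "sigma_plus x < sigma_plus y"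
proof (rule ccontr)
  assume not_less: "\<not> ?thesis"
  define a b where "a = sigma_plus x" and "b = sigma_plus y"
  then have "b \<le> a" using not_less by simp
  have "4 < y" using assms by simp
  note bounds =
    sigma_plus_bounds[OF \<open>4 < x\<close>, folded a_def] sigma_plus_bounds[OF \<open>4 < y\<close>, folded b_def]
  have xa: "x * a = 2 * a - a\<^sup>2 - 1" and yb: "y * b = 2 * b - b\<^sup>2 - 1"
    using sigma_plus_root[OF \<open>4 < x\<close>] sigma_plus_root[OF \<open>4 < y\<close>]
    by (simp_all add: a_def b_def algebra_simps)
  have "(x - y) * (a * b) = (x * a) * b - (y * b) * a"
    by (simp add: algebra_simps)
  also have "\<dots> = (a - b) * (1 - a * b)"
    unfolding xa yb by (simp add: algebra_simps power2_eq_square)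
  finally have key: "(x - y) * (a * b) = (a - b) * (1 - a * b)" .
  have "(-a) * (-b) < 1 * 1"
    using bounds by (intro mult_strict_mono) auto
  then have "(a - b) * (1 - a * b) \<ge> 0"
    using \<open>b \<le> a\<close> by simp
  moreover have "(x - y) * (a * b) < 0"
    using assms bounds by (simp add: mult_neg_pos mult_neg_neg)
  ultimately show False
    using key by linarith
qed

text \<open>The other characteristic root is \<open>1 / sigma_plus lam\<close>, of modulus larger than one, so a
  bounded solution has no component along it.\<close>
lemma bounded_recurrence_geometric:
  fixes x :: "nat \<Rightarrow> real"
  assumes lam: "lam > 4" and bounded: "\<And>n. \<bar>x n\<bar> \<le> B"
    and rec: "\<And>n. x (n + 2) + (lam - 2) * x (n + 1) + x n = 0"
  shows "x n = sigma_plus lam ^ n * x 0"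
proof -
  define s where "s = sigma_plus lam"
  define t where "t = 1 / s"
  have s: "-1 < s" "s < 0" "s\<^sup>2 + (lam - 2) * s + 1 = 0"
    using sigma_plus_bounds[OF lam] sigma_plus_root[OF lam] by (simp_all add: s_def)
  have st: "s * t = 1"
    using s by (simp add: t_def)
  have "s * (t + (lam - 2) + s) = 0"
    using st s(3) by (simp add: algebra_simps power2_eq_square)
  then have t_eq: "t = 2 - lam - s"
    using s by simp
  have "\<bar>t\<bar> > 1"
    using s by (simp add: t_def divide_less_eq)
  define w where "w n = x (n + 1) - s * x n" for n
  have w_step: "w (Suc n) = t * w n" for n
  proof -
    have "w (Suc n) = t * x (n + 1) - x n"
      using rec[of n] by (simp add: w_def t_eq algebra_simps)
    also have "\<dots> = t * w n"
      using st by (simp add: w_def right_diff_distrib mult.assoc[symmetric] mult.commute[of t s])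
    finally show ?thesis .
  qed
  have w_pow: "w n = t ^ n * w 0" for n
    by (induction n) (simp_all add: w_step)
  have w_bounded: "\<bar>w n\<bar> \<le> 2 * B" for n
  proof -
    have "\<bar>w n\<bar> \<le> \<bar>x (n + 1)\<bar> + \<bar>s\<bar> * \<bar>x n\<bar>"
      unfolding w_def by (metis abs_mult abs_triangle_ineq4)
    also have "\<dots> \<le> B + 1 * B"
      using bounded[of n] bounded[of "n + 1"] s by (intro add_mono mult_mono) auto
    finally show ?thesis by simp
  qed
  have "w 0 = 0"
  proof (rule ccontr)
    assume "w 0 \<noteq> 0"
    obtain n where "2 * B / \<bar>w 0\<bar> < \<bar>t\<bar> ^ n"
      using real_arch_pow[OF \<open>\<bar>t\<bar> > 1\<close>] by blast
    then have "2 * B < \<bar>t\<bar> ^ n * \<bar>w 0\<bar>"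
      using \<open>w 0 \<noteq> 0\<close> by (simp add: pos_divide_less_eq)
    also have "\<dots> = \<bar>w n\<bar>"
      unfolding w_pow[of n] by (simp add: abs_mult power_abs)
    finally show False
      using w_bounded[of n] by simp
  qed
  then have "x (Suc n) = s * x n" for n
    using w_pow[of n] by (simp add: w_def)
  then show ?thesis
    by (induction n) (simp_all add: s_def)
qed

section \<open>Zeros of \<open>F_A\<close> and \<open>F_S\<close>\<close>

lemma F_A_eq_0_iff:
  assumes "p \<ge> 3" "lam > 4"
  shows "F_A p lam = 0 \<longleftrightarrow> lam = real p + 1 + 1 / (real p - 1)"
proof
  assume "F_A p lam = 0"
  then have sigma: "sigma_plus lam = real p + 1 - lam"
    by (simp add: F_A_def)
  have "(real p + 1 - lam) * (real p - 1) + 1 = 0"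
    using sigma_plus_root[OF assms(2)] unfolding sigma by (simp add: algebra_simps power2_eq_square)
  then show "lam = real p + 1 + 1 / (real p - 1)"
    using assms(1) by (simp add: field_simps)
next
  assume lam: "lam = real p + 1 + 1 / (real p - 1)"
  have "sigma_plus lam = - 1 / (real p - 1)"
  proof (rule sigma_plus_unique_root[OF assms(2)])
    show "- 1 < - 1 / (real p - 1)"
      using assms(1) by (simp add: field_simps)
    define q where "q = real p - 1"
    have "q > 0" "lam - 2 = q + 1 / q"
      using assms(1) by (simp_all add: q_def lam)
    then show "(- 1 / (real p - 1))\<^sup>2 + (lam - 2) * (- 1 / (real p - 1)) + 1 = 0"
      unfolding q_def[symmetric] by (simp add: field_simps power2_eq_square)
  qed
  then show "F_A p lam = 0"
    by (simp add: F_A_def lam)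
qed

lemma F_A_unique_root_between:
  assumes "p \<ge> 5"
  shows "\<exists>!lam. lam \<in> {real p<..<real p + 2} \<and> F_A p lam = 0"
proof (rule ex1I)
  let ?root = "real p + 1 + 1 / (real p - 1)"
  have frac: "0 < 1 / (real p - 1)" "1 / (real p - 1) < 1"
    using assms by simp_all
  then have "?root \<in> {real p<..<real p + 2}"
    unfolding greaterThanLessThan_iff by linarith
  moreover have "?root > 4"
    using assms frac(1) by linarith
  ultimately show "?root \<in> {real p<..<real p + 2} \<and> F_A p ?root = 0"
    using F_A_eq_0_iff[of p ?root] assms by simp
  show "lam = ?root" if "lam \<in> {real p<..<real p + 2} \<and> F_A p lam = 0" for lam
    using F_A_eq_0_iff[of p lam] that assms by simp
qed

lemma F_A_no_root_outside:
  assumes "p \<ge> 3" "lam > 4" "lam \<le> real p \<or> lam \<ge> real p + 2"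
  shows "F_A p lam \<noteq> 0"
proof
  assume "F_A p lam = 0"
  then have "lam = real p + 1 + 1 / (real p - 1)"
    using F_A_eq_0_iff[OF assms(1,2)] by simp
  moreover have "0 < 1 / (real p - 1)" "1 / (real p - 1) < 1"
    using assms(1) by simp_all
  ultimately show False
    using assms(3) by linarith
qed

text \<open>Dividing \<open>F_S\<close> by \<open>2 - lam\<close> separates the increasing \<open>sigma_plus\<close> from a decreasing
  rational function, so \<open>F_S\<close> has at most one zero in \<open>lam > 4\<close>.\<close>
definition rho_S :: "nat \<Rightarrow> real \<Rightarrow> real" where
  "rho_S p lam = real p - 1 - lam + 2 * (real p - 2) / (lam - 2)"

lemma F_S_eq_0_iff: "lam > 4 \<Longrightarrow> F_S p lam = 0 \<longleftrightarrow> sigma_plus lam = rho_S p lam"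
proof -
  assume "lam > 4"
  then have "F_S p lam = (2 - lam) * (sigma_plus lam - rho_S p lam)"
    by (simp add: F_S_def rho_S_def field_simps)
  then show ?thesis
    using \<open>lam > 4\<close> by simp
qed

lemma rho_S_strict_antimono:
  assumes "p \<ge> 2" "4 < x" "x < y"
  shows "rho_S p y < rho_S p x"
proof -
  have "2 * (real p - 2) / (y - 2) \<le> 2 * (real p - 2) / (x - 2)"
    using assms by (intro divide_left_mono) auto
  then show ?thesis
    unfolding rho_S_def using assms by linarith
qed

lemma rho_S_ge_1:
  assumes "2 < lam" "lam \<le> real p"
  shows "rho_S p lam \<ge> 1"
proof -
  have "2 * (real p - 2) / (lam - 2) \<ge> 2"
    using assms by (simp add: field_simps)
  then show ?thesis
    unfolding rho_S_def using assms by linarith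
qed

lemma rho_S_less_minus_1:
  assumes "2 < lam" "lam \<ge> real p + 2"
  shows "rho_S p lam < -1"
proof -
  have "2 * (real p - 2) / (lam - 2) < 2"
    using assms by (simp add: field_simps)
  then show ?thesis
    unfolding rho_S_def using assms by linarith
qed

lemma F_S_no_root_outside:
  assumes "lam > 4" "lam \<le> real p \<or> lam \<ge> real p + 2"
  shows "F_S p lam \<noteq> 0"
  using assms rho_S_ge_1[of lam p] rho_S_less_minus_1[of lam p] F_S_eq_0_iff[OF assms(1)]
    sigma_plus_bounds[OF assms(1)]
  by auto

lemma F_S_root_exists_between:
  assumes "p \<ge> 5"
  shows "\<exists>lam \<in> {real p<..<real p + 2}. F_S p lam = 0"
proof -
  define h where "h lam = sigma_plus lam - rho_S p lam" for lam
  have p: "real p \<ge> 5"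
    using assms by simp
  have "continuous_on {real p .. real p + 2} h"
    unfolding h_def sigma_plus_def rho_S_def using p by (intro continuous_intros) auto
  moreover have "h (real p) \<le> 0" "0 \<le> h (real p + 2)"
    using rho_S_ge_1[of "real p" p] rho_S_less_minus_1[of "real p + 2" p]
      sigma_plus_bounds[of "real p"] sigma_plus_bounds[of "real p + 2"] p
    by (simp_all add: h_def)
  ultimately obtain lam where lam: "real p \<le> lam" "lam \<le> real p + 2" "h lam = 0"
    using IVT'[of h "real p" 0 "real p + 2"] by auto
  then have "lam > 4" "F_S p lam = 0"
    using p F_S_eq_0_iff[of lam p] by (simp_all add: h_def)
  moreover from this have "lam \<noteq> real p" "lam \<noteq> real p + 2"
    using F_S_no_root_outside by auto
  ultimately show ?thesis
    using lam by auto
qed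

lemma F_S_root_unique:
  assumes "p \<ge> 2" "x > 4" "y > 4" "F_S p x = 0" "F_S p y = 0"
  shows "x = y"
proof -
  have less: "sigma_plus a - rho_S p a < sigma_plus b - rho_S p b" if "4 < a" "a < b" for a b
    using sigma_plus_strict_mono[OF that] rho_S_strict_antimono[OF assms(1) that] by simp
  have "sigma_plus x - rho_S p x = sigma_plus y - rho_S p y"
    using assms(2-5) F_S_eq_0_iff by simp
  then show ?thesis
    using less[of x y] less[of y x] assms(2,3) by (cases x y rule: linorder_cases) auto
qed

lemma F_S_unique_root_between:
  assumes "p \<ge> 5"
  shows "\<exists>!lam. lam \<in> {real p<..<real p + 2} \<and> F_S p lam = 0"
proof -
  obtain lam where "lam \<in> {real p<..<real p + 2}" "F_S p lam = 0"
    using F_S_root_exists_between[OF assms] by blast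
  moreover have "lam' > 4" if "lam' \<in> {real p<..<real p + 2}" for lam'
    using that assms by auto
  ultimately show ?thesis
    using F_S_root_unique[of p] assms by (intro ex1I[of _ lam]) auto
qed

lemma F_A_F_S_no_common_root:
  assumes "lam > 4" "F_A p lam = 0"
  shows "F_S p lam \<noteq> 0"
proof
  assume "F_S p lam = 0"
  have sigma: "sigma_plus lam = real p + 1 - lam"
    using assms(2) by (simp add: F_A_def)
  then have "F_S p lam = 2 * (real p - lam)"
    unfolding F_S_def sigma by (simp add: algebra_simps)
  then have "sigma_plus lam = 1"
    using \<open>F_S p lam = 0\<close> sigma by simp
  then show False
    using sigma_plus_bounds[OF assms(1)] by simp
qed

section \<open>The Laplacian and the reflection of the graph\<close>

definition reflect :: "nat \<Rightarrow> int \<Rightarrow> int" where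
  "reflect p i = - int p + 1 - i"

lemma reflect_reflect [simp]: "reflect p (reflect p i) = i"
  by (simp add: reflect_def)

lemma inj_reflect: "inj (reflect p)"
  by (metis injI reflect_reflect)

lemma adj_reflect: "adj p (reflect p i) (reflect p j) \<longleftrightarrow> adj p i j"
  unfolding adj_def reflect_def by (auto simp: abs_if min_def)

lemma neighbours_reflect: "{j. adj p (reflect p i) j} = reflect p ` {j. adj p i j}"
  by (auto simp: image_iff) (metis adj_reflect reflect_reflect)+

lemma finite_neighbours: "finite {j. adj p i j}"
proof (rule finite_subset)
  show "{j. adj p i j} \<subseteq> {i - 1, i + 1} \<union> {- int p + 1 .. 0}"
    unfolding adj_def by auto
qed auto

lemma laplacian_eq_sum: "laplacian p v i = (\<Sum>j | adj p i j. v i - v j)"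
  by (simp add: laplacian_def deg_def sum_subtractf finite_neighbours)

lemma laplacian_reflect: "laplacian p (v \<circ> reflect p) i = laplacian p v (reflect p i)"
proof -
  have "laplacian p v (reflect p i) = (\<Sum>j\<in>reflect p ` {j. adj p i j}. v (reflect p i) - v j)"
    by (simp add: laplacian_eq_sum neighbours_reflect)
  also have "\<dots> = laplacian p (v \<circ> reflect p) i"
    by (simp add: laplacian_eq_sum sum.reindex inj_on_subset[OF inj_reflect])
  finally show ?thesis ..
qed

lemma eigen_reflect:
  assumes "laplacian p v = (\<lambda>i. lam * v i)"
  shows "laplacian p (v \<circ> reflect p) = (\<lambda>i. lam * (v \<circ> reflect p) i)"
  using assms by (simp add: fun_eq_iff laplacian_reflect)

lemma laplacian_path:
  assumes "i \<ge> 1 \<or> i \<le> - int p"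
  shows "laplacian p v i = 2 * v i - v (i - 1) - v (i + 1)"
proof -
  have "{j. adj p i j} = {i - 1, i + 1}"
    using assms unfolding adj_def by auto
  then show ?thesis
    by (simp add: laplacian_eq_sum)
qed

lemma laplacian_attachment:
  assumes "p \<ge> 2" "\<And>i. i \<in> {- int p + 2 .. -1} \<Longrightarrow> v i = m"
  shows "laplacian p v 0 = (real p - 2) * (v 0 - m) + (v 0 - v (- int p + 1)) + (v 0 - v 1)"
proof -
  have "{j. adj p 0 j} = insert 1 (insert (- int p + 1) {- int p + 2 .. -1})"
    using assms(1) unfolding adj_def by auto
  moreover have "(\<Sum>j\<in>{- int p + 2 .. -1}. v 0 - v j) = (real p - 2) * (v 0 - m)"
    using assms by (simp add: of_nat_diff)
  ultimately show ?thesis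
    using assms(1) by (simp add: laplacian_eq_sum algebra_simps)
qed

lemma laplacian_clique_interior:
  assumes "i \<in> {- int p + 2 .. -1}" "\<And>i. i \<in> {- int p + 2 .. -1} \<Longrightarrow> v i = m"
  shows "laplacian p v i = 2 * m - v 0 - v (- int p + 1)"
proof -
  have "{j. adj p i j} = insert 0 (insert (- int p + 1) ({- int p + 2 .. -1} - {i}))"
    using assms(1) unfolding adj_def by auto
  moreover have "(\<Sum>j\<in>{- int p + 2 .. -1} - {i}. v i - v j) = 0"
    using assms by (intro sum.neutral) auto
  ultimately show ?thesis
    using assms by (simp add: laplacian_eq_sum)
qed

section \<open>Eigenvectors orthogonal to \<open>E_K\<close>\<close>

definition geom_vec :: "nat \<Rightarrow> real \<Rightarrow> real \<Rightarrow> real \<Rightarrow> real \<Rightarrow> int \<Rightarrow> real" where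
  "geom_vec p s c d m i =
     (if i \<ge> 0 then c * s ^ nat i
      else if i \<le> - int p + 1 then d * s ^ nat (reflect p i)
      else m)"

lemma geom_vec_right_tail: "i \<ge> 0 \<Longrightarrow> geom_vec p s c d m i = c * s ^ nat i"
  by (simp add: geom_vec_def)

lemma geom_vec_left_tail:
  "p \<ge> 2 \<Longrightarrow> i \<le> - int p + 1 \<Longrightarrow> geom_vec p s c d m i = d * s ^ nat (reflect p i)"
  by (simp add: geom_vec_def reflect_def)

lemma geom_vec_interior: "i \<in> {- int p + 2 .. -1} \<Longrightarrow> geom_vec p s c d m i = m"
  by (simp add: geom_vec_def)

lemma geom_vec_reflect: "p \<ge> 2 \<Longrightarrow> geom_vec p s c d m \<circ> reflect p = geom_vec p s d c m"
  by (auto simp: fun_eq_iff geom_vec_def reflect_def)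

lemma symmetric_geom_vec_iff: "p \<ge> 2 \<Longrightarrow> symmetric_vec p (geom_vec p s c d m) \<longleftrightarrow> d = c"
  using geom_vec_left_tail[of p "- int p + 1" s c d m]
  by (auto simp: symmetric_vec_def geom_vec_def reflect_def)

lemma antisymmetric_geom_vec_iff: "p \<ge> 2 \<Longrightarrow> antisymmetric_vec p (geom_vec p s c d m) \<longleftrightarrow> d = - c"
  using geom_vec_left_tail[of p "- int p + 1" s c d m]
  by (auto simp: antisymmetric_vec_def geom_vec_def reflect_def)

lemma geom_vec_eq_0_iff:
  assumes "p \<ge> 3"
  shows "geom_vec p s c d m = (\<lambda>_. 0) \<longleftrightarrow> c = 0 \<and> d = 0 \<and> m = 0"
proof
  assume zero: "geom_vec p s c d m = (\<lambda>_. 0)"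
  have "c = geom_vec p s c d m 0" "d = geom_vec p s c d m (- int p + 1)"
    "m = geom_vec p s c d m (-1)"
    using assms by (simp_all add: geom_vec_right_tail geom_vec_left_tail geom_vec_interior reflect_def)
  then show "c = 0 \<and> d = 0 \<and> m = 0"
    unfolding zero by simp
qed (simp add: geom_vec_def fun_eq_iff)

lemma laplacian_geom_vec_attachments:
  assumes "p \<ge> 2"
  shows "laplacian p (geom_vec p s c d m) 0 = (real p - 2) * (c - m) + (c - d) + (c - c * s)"
    and "laplacian p (geom_vec p s c d m) (- int p + 1) = (real p - 2) * (d - m) + (d - c) + (d - d * s)"
proof -
  have at_0: "laplacian p (geom_vec p s c' d' m) 0 = (real p - 2) * (c' - m) + (c' - d') + (c' - c' * s)"
    for c' d'
    using laplacian_attachment[OF assms, of "geom_vec p s c' d' m" m] assms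
    by (simp add: geom_vec_interior geom_vec_right_tail geom_vec_left_tail reflect_def)
  then show "laplacian p (geom_vec p s c d m) 0 = (real p - 2) * (c - m) + (c - d) + (c - c * s)" .
  have "laplacian p (geom_vec p s c d m) (- int p + 1) = laplacian p (geom_vec p s d c m) 0"
    using laplacian_reflect[of p "geom_vec p s d c m" "- int p + 1"]
    by (simp add: geom_vec_reflect[OF assms] reflect_def)
  with at_0 show "laplacian p (geom_vec p s c d m) (- int p + 1)
      = (real p - 2) * (d - m) + (d - c) + (d - d * s)"
    by simp
qed

lemma laplacian_geom_vec_interior:
  assumes "i \<in> {- int p + 2 .. -1}"
  shows "laplacian p (geom_vec p s c d m) i = 2 * m - c - d"
proof -
  have "p \<ge> 2"
    using assms by auto
  then show ?thesis
    using laplacian_clique_interior[OF assms, of "geom_vec p s c d m" m]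
    by (simp add: geom_vec_interior geom_vec_right_tail geom_vec_left_tail reflect_def)
qed

context
  fixes lam :: real
  assumes lam: "lam > 4"
begin

lemma laplacian_geom_vec_right_tail:
  assumes "i \<ge> 1"
  shows "laplacian p (geom_vec p (sigma_plus lam) c d m) i = lam * geom_vec p (sigma_plus lam) c d m i"
proof -
  define s where "s = sigma_plus lam"
  define n where "n = nat (i - 1)"
  have n: "nat i = Suc n" "nat (i - 1) = n" "nat (i + 1) = Suc (Suc n)"
    using assms by (simp_all add: n_def)
  have "laplacian p (geom_vec p s c d m) i
      = 2 * geom_vec p s c d m i - geom_vec p s c d m (i - 1) - geom_vec p s c d m (i + 1)"
    using assms by (simp add: laplacian_path)
  also have "\<dots> = 2 * (c * s ^ Suc n) - c * s ^ n - c * s ^ Suc (Suc n)"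
    using assms by (simp add: geom_vec_right_tail n)
  also have "\<dots> = c * s ^ n * (2 * s - 1 - s\<^sup>2)"
    by (simp add: algebra_simps power2_eq_square)
  also have "2 * s - 1 - s\<^sup>2 = lam * s"
    using sigma_plus_root[OF lam] by (simp add: s_def algebra_simps)
  finally show ?thesis
    using assms by (simp add: geom_vec_right_tail n s_def algebra_simps)
qed

lemma laplacian_geom_vec_tails:
  assumes "p \<ge> 2" "i \<ge> 1 \<or> i \<le> - int p"
  shows "laplacian p (geom_vec p (sigma_plus lam) c d m) i = lam * geom_vec p (sigma_plus lam) c d m i"
  using assms(2)
proof
  assume "i \<le> - int p"
  then have "reflect p i \<ge> 1"
    by (simp add: reflect_def)
  have "laplacian p (geom_vec p (sigma_plus lam) c d m) i
      = laplacian p (geom_vec p (sigma_plus lam) d c m \<circ> reflect p) i"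
    by (simp add: geom_vec_reflect[OF assms(1)])
  also have "\<dots> = lam * geom_vec p (sigma_plus lam) d c m (reflect p i)"
    by (simp add: laplacian_reflect laplacian_geom_vec_right_tail[OF \<open>reflect p i \<ge> 1\<close>])
  also have "\<dots> = lam * geom_vec p (sigma_plus lam) c d m i"
    using fun_cong[OF geom_vec_reflect[OF assms(1), of "sigma_plus lam" d c m], of i] by simp
  finally show ?thesis .
qed (rule laplacian_geom_vec_right_tail)

lemma geom_vec_eigen_iff_clique_equations:
  assumes "p \<ge> 3"
  shows "laplacian p (geom_vec p (sigma_plus lam) c d m) = (\<lambda>i. lam * geom_vec p (sigma_plus lam) c d m i)
    \<longleftrightarrow> (real p - 2) * (c - m) + (c - d) + (c - c * sigma_plus lam) = lam * c
      \<and> (real p - 2) * (d - m) + (d - c) + (d - d * sigma_plus lam) = lam * d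
      \<and> 2 * m - c - d = lam * m"
    (is "?eigen \<longleftrightarrow> ?clique")
proof -
  let ?g = "geom_vec p (sigma_plus lam) c d m"
  have p: "p \<ge> 2" "-1 \<in> {- int p + 2 .. -1}"
    using assms by auto
  have clique_values: "?g 0 = c" "?g (- int p + 1) = d" "?g (-1) = m"
    using p by (simp_all add: geom_vec_right_tail geom_vec_left_tail geom_vec_interior reflect_def)
  show ?thesis
  proof
    assume ?eigen
    then have "laplacian p ?g i = lam * ?g i" for i
      by simp
    from this[of 0] this[of "- int p + 1"] this[of "-1"] show ?clique
      using laplacian_geom_vec_attachments[OF p(1)] laplacian_geom_vec_interior[OF p(2)] clique_values
      by simp
  next
    assume ?clique
    show ?eigen
    proof
      fix i
      consider "i \<ge> 1 \<or> i \<le> - int p" | "i = 0" | "i = - int p + 1" | "i \<in> {- int p + 2 .. -1}"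
        by fastforce
      then show "laplacian p ?g i = lam * ?g i"
      proof cases
        case 1
        then show ?thesis
          by (rule laplacian_geom_vec_tails[OF p(1)])
      next
        case 4
        then show ?thesis
          using \<open>?clique\<close> by (simp add: laplacian_geom_vec_interior geom_vec_interior)
      qed (use \<open>?clique\<close> laplacian_geom_vec_attachments[OF p(1)] clique_values in simp_all)
    qed
  qed
qed

text \<open>The difference of the equations at the two attachment vertices is \<open>(c - d) F_A\<close>; their sum,
  after eliminating \<open>m\<close> by the interior equation, is a multiple of \<open>(c + d) F_S\<close>.\<close>
lemma geom_vec_eigen_iff:
  assumes "p \<ge> 3"
  shows "laplacian p (geom_vec p (sigma_plus lam) c d m) = (\<lambda>i. lam * geom_vec p (sigma_plus lam) c d m i)
    \<longleftrightarrow> (c - d) * F_A p lam = 0 \<and> (c + d) * F_S p lam = 0 \<and> (2 - lam) * m = c + d"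
proof -
  define s where "s = sigma_plus lam"
  define A0 A1 M where
    "A0 = (real p - 2) * (c - m) + (c - d) + (c - c * s) - lam * c" and
    "A1 = (real p - 2) * (d - m) + (d - c) + (d - d * s) - lam * d" and
    "M = 2 * m - c - d - lam * m"
  have "laplacian p (geom_vec p s c d m) = (\<lambda>i. lam * geom_vec p s c d m i)
      \<longleftrightarrow> A0 = 0 \<and> A1 = 0 \<and> M = 0"
    unfolding s_def geom_vec_eigen_iff_clique_equations[OF assms] by (simp add: A0_def A1_def M_def s_def)
  moreover have "(c - d) * F_A p lam = A1 - A0"
    by (simp add: F_A_def A0_def A1_def s_def algebra_simps)
  moreover have "(c + d) * F_S p lam = (lam - 2) * (A0 + A1) - 2 * (real p - 2) * M"
    by (simp add: F_S_def A0_def A1_def M_def s_def algebra_simps)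
  moreover have "(2 - lam) * m = c + d \<longleftrightarrow> M = 0"
    by (auto simp: M_def algebra_simps)
  moreover have "lam \<noteq> 2"
    using lam by simp
  ultimately show ?thesis
    unfolding s_def by auto
qed

end

lemma l2_bounded:
  assumes "v \<in> l2"
  obtains B where "\<And>i. \<bar>v i\<bar> \<le> B"
proof
  fix i
  have summable: "(\<lambda>i. (v i)\<^sup>2) summable_on UNIV"
    using assms by (simp add: l2_def)
  have "(v i)\<^sup>2 = infsum (\<lambda>i. (v i)\<^sup>2) {i}"
    by simp
  also have "\<dots> \<le> infsum (\<lambda>i. (v i)\<^sup>2) UNIV"
    using summable by (intro infsum_mono_neutral) auto
  finally show "\<bar>v i\<bar> \<le> sqrt (infsum (\<lambda>i. (v i)\<^sup>2) UNIV)"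
    by (simp add: real_le_rsqrt)
qed

lemma geometric_square_summable:
  fixes s :: real
  assumes "\<bar>s\<bar> < 1"
  shows "(\<lambda>n::nat. (c * s ^ n)\<^sup>2) summable_on UNIV"
proof -
  have "summable (\<lambda>n. c\<^sup>2 * (s\<^sup>2) ^ n)"
    using assms by (intro summable_mult summable_geometric) (simp add: abs_square_less_1)
  then have "summable (\<lambda>n. (c * s ^ n)\<^sup>2)"
    by (simp add: power_mult_distrib mult.commute flip: power_mult)
  then show ?thesis
    by (simp add: summable_on_UNIV_nonneg_real_iff)
qed

lemma l2_of_tails:
  assumes "(\<lambda>n. (v (int n))\<^sup>2) summable_on UNIV" "(\<lambda>n. (v (reflect p (int n)))\<^sup>2) summable_on UNIV"
  shows "v \<in> l2"
proof -
  have cover: "UNIV = range int \<union> range (\<lambda>n. reflect p (int n)) \<union> {- int p + 2 .. -1}"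
  proof (intro set_eqI iffI)
    fix i :: int
    have "i \<ge> 0 \<or> reflect p i \<ge> 0 \<or> i \<in> {- int p + 2 .. -1}"
      by (auto simp: reflect_def)
    then show "i \<in> range int \<union> range (\<lambda>n. reflect p (int n)) \<union> {- int p + 2 .. -1}"
      by (metis UnI1 UnI2 nonneg_int_cases rangeI reflect_reflect)
  qed simp
  have right: "(\<lambda>i. (v i)\<^sup>2) summable_on range int"
    using assms(1) by (simp add: summable_on_reindex o_def)
  have left: "(\<lambda>i. (v i)\<^sup>2) summable_on range (\<lambda>n. reflect p (int n))"
  proof -
    have "inj (\<lambda>n. reflect p (int n))"
      by (simp add: inj_def reflect_def)
    then show ?thesis
      using assms(2) by (simp add: summable_on_reindex o_def)
  qed
  have "(\<lambda>i. (v i)\<^sup>2) summable_on range int \<union> range (\<lambda>n. reflect p (int n)) \<union> {- int p + 2 .. -1}"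
    by (intro summable_on_union right left summable_on_finite) simp
  then show ?thesis
    unfolding l2_def cover[symmetric] by simp
qed

lemma geom_vec_in_l2:
  assumes "p \<ge> 2" "\<bar>s\<bar> < 1"
  shows "geom_vec p s c d m \<in> l2"
proof (rule l2_of_tails)
  show "(\<lambda>n. (geom_vec p s c d m (int n))\<^sup>2) summable_on UNIV"
    using geometric_square_summable[OF assms(2)] by (simp add: geom_vec_right_tail)
  show "(\<lambda>n. (geom_vec p s c d m (reflect p (int n)))\<^sup>2) summable_on UNIV"
    using geometric_square_summable[OF assms(2)] assms(1)
    by (simp add: geom_vec_left_tail reflect_def)
qed

lemma l2_inner_finite_support:
  assumes "finite F" "\<And>i. i \<notin> F \<Longrightarrow> u i = 0"
  shows "l2_inner u w = (\<Sum>i\<in>F. u i * w i)"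
proof -
  have "l2_inner u w = infsum (\<lambda>i. u i * w i) F"
    unfolding l2_inner_def by (rule infsum_cong_neutral) (use assms in auto)
  then show ?thesis
    using assms(1) by simp
qed

lemma E_K_perp_const_interior:
  assumes "w \<in> E_K_perp p" "i \<in> {- int p + 2 .. -1}"
  shows "w i = w (-1)"
proof -
  define u :: "int \<Rightarrow> real" where "u k = of_bool (k = i) - of_bool (k = -1)" for k
  have "u \<in> E_K p"
    using assms(2) by (auto simp: E_K_def u_def sum_subtractf)
  then have "l2_inner u w = 0"
    using assms(1) by (simp add: E_K_perp_def)
  moreover have "l2_inner u w = w i - w (-1)"
  proof (cases "i = -1")
    case False
    then show ?thesis
      by (subst l2_inner_finite_support[of "{i, -1}"]) (auto simp: u_def)
  qed (simp add: l2_inner_def u_def)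
  ultimately show ?thesis
    by simp
qed

lemma geom_vec_in_E_K_perp:
  assumes "p \<ge> 2" "\<bar>s\<bar> < 1"
  shows "geom_vec p s c d m \<in> E_K_perp p"
proof -
  have "l2_inner u (geom_vec p s c d m) = 0" if "u \<in> E_K p" for u
  proof -
    have "l2_inner u (geom_vec p s c d m) = (\<Sum>k\<in>{- int p + 2 .. -1}. u k * m)"
      using that by (subst l2_inner_finite_support[of "{- int p + 2 .. -1}"])
        (auto simp: E_K_def geom_vec_interior)
    also have "\<dots> = 0"
      using that by (simp add: E_K_def flip: sum_distrib_right)
    finally show ?thesis .
  qed
  then show ?thesis
    using geom_vec_in_l2[OF assms] by (simp add: E_K_perp_def)
qed

lemma eigen_bounded_right_tail:
  assumes "lam > 4" "laplacian p v = (\<lambda>i. lam * v i)" "\<And>i. \<bar>v i\<bar> \<le> B"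
  shows "v (int n) = sigma_plus lam ^ n * v 0"
proof -
  have "v (int (n + 2)) + (lam - 2) * v (int (n + 1)) + v (int n) = 0" for n
    using laplacian_path[of "int n + 1" p v] fun_cong[OF assms(2), of "int n + 1"]
    by (simp add: algebra_simps)
  from bounded_recurrence_geometric[of lam "\<lambda>n. v (int n)", OF assms(1) assms(3) this]
  show ?thesis by simp
qed

lemma eigvec_perp_eq_geom_vec:
  assumes "p \<ge> 2" "lam > 4" "is_eigvec p v lam" "v \<in> E_K_perp p"
  shows "v = geom_vec p (sigma_plus lam) (v 0) (v (- int p + 1)) (v (-1))"
proof
  fix i
  have eigen: "laplacian p v = (\<lambda>i. lam * v i)" and "v \<in> l2"
    using assms(3) by (simp_all add: is_eigvec_def)
  obtain B where B: "\<And>i. \<bar>v i\<bar> \<le> B"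
    using l2_bounded[OF \<open>v \<in> l2\<close>] by blast
  then have B': "\<bar>(v \<circ> reflect p) i\<bar> \<le> B" for i
    by simp
  have "i \<ge> 0 \<or> i \<le> - int p + 1 \<or> i \<in> {- int p + 2 .. -1}"
    by auto
  then show "v i = geom_vec p (sigma_plus lam) (v 0) (v (- int p + 1)) (v (-1)) i"
  proof (elim disjE)
    assume "i \<ge> 0"
    then show ?thesis
      using eigen_bounded_right_tail[OF assms(2) eigen B, of "nat i"] by (simp add: geom_vec_right_tail)
  next
    assume "i \<le> - int p + 1"
    then have i: "i = reflect p (int (nat (reflect p i)))"
      by (simp add: reflect_def)
    have "v i = sigma_plus lam ^ nat (reflect p i) * v (reflect p 0)"
      using eigen_bounded_right_tail[OF assms(2) eigen_reflect[OF eigen] B', of "nat (reflect p i)"]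
      by (subst i) simp
    with \<open>i \<le> - int p + 1\<close> show ?thesis
      using assms(1) by (simp add: geom_vec_left_tail reflect_def)
  next
    assume "i \<in> {- int p + 2 .. -1}"
    then show ?thesis
      using E_K_perp_const_interior[OF assms(4) \<open>i \<in> {- int p + 2 .. -1}\<close>]
      by (simp add: geom_vec_interior)
  qed
qed

lemma eigvec_perp_iff_geom_vec:
  assumes "p \<ge> 3" "lam > 4"
  shows "is_eigvec p v lam \<and> v \<in> E_K_perp p \<longleftrightarrow>
    (\<exists>c d. (c \<noteq> 0 \<or> d \<noteq> 0) \<and> (c - d) * F_A p lam = 0 \<and> (c + d) * F_S p lam = 0 \<and>
       v = geom_vec p (sigma_plus lam) c d ((c + d) / (2 - lam)))"
    (is "?eigvec \<longleftrightarrow> (\<exists>c d. ?geom c d)")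
proof
  assume ?eigvec
  have "lam \<noteq> 2" "p \<ge> 2"
    using assms by auto
  define c d m where "c = v 0" and "d = v (- int p + 1)" and "m = v (-1)"
  have v: "v = geom_vec p (sigma_plus lam) c d m"
    unfolding c_def d_def m_def using eigvec_perp_eq_geom_vec[OF \<open>p \<ge> 2\<close> assms(2)] \<open>?eigvec\<close> by blast
  have eqs: "(c - d) * F_A p lam = 0" "(c + d) * F_S p lam = 0" "(2 - lam) * m = c + d"
    using \<open>?eigvec\<close> geom_vec_eigen_iff[OF assms(2,1)] v by (simp_all add: is_eigvec_def)
  have "c \<noteq> 0 \<or> d \<noteq> 0"
  proof (rule ccontr)
    assume "\<not> (c \<noteq> 0 \<or> d \<noteq> 0)"
    then have "c = 0" "d = 0" "m = 0"
      using eqs(3) \<open>lam \<noteq> 2\<close> by auto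
    then show False
      using \<open>?eigvec\<close> v geom_vec_eq_0_iff[OF assms(1)] by (simp add: is_eigvec_def)
  qed
  moreover have "m = (c + d) / (2 - lam)"
    using eqs(3) \<open>lam \<noteq> 2\<close> by (simp add: field_simps)
  ultimately have "?geom c d"
    using v eqs by blast
  then show "\<exists>c d. ?geom c d"
    by blast
next
  assume "\<exists>c d. ?geom c d"
  then obtain c d where nonzero: "c \<noteq> 0 \<or> d \<noteq> 0" and eqs: "(c - d) * F_A p lam = 0"
    "(c + d) * F_S p lam = 0" and v: "v = geom_vec p (sigma_plus lam) c d ((c + d) / (2 - lam))"
    by blast
  have "\<bar>sigma_plus lam\<bar> < 1" "p \<ge> 2" "lam \<noteq> 2"
    using assms abs_sigma_plus_less_1 by auto
  moreover have "laplacian p v = (\<lambda>i. lam * v i)"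
    unfolding v geom_vec_eigen_iff[OF assms(2,1)] using eqs \<open>lam \<noteq> 2\<close> by simp
  moreover have "v \<noteq> (\<lambda>_. 0)"
    unfolding v geom_vec_eq_0_iff[OF assms(1)] using nonzero by auto
  ultimately show ?eigvec
    unfolding v is_eigvec_def using geom_vec_in_l2 geom_vec_in_E_K_perp by simp
qed

lemma eigvec_perp_symmetric_or_antisymmetric:
  assumes "p \<ge> 3" "lam > 4" "is_eigvec p v lam" "v \<in> E_K_perp p"
  shows "symmetric_vec p v \<or> antisymmetric_vec p v"
proof -
  obtain c d where eqs: "(c - d) * F_A p lam = 0" "(c + d) * F_S p lam = 0"
    and v: "v = geom_vec p (sigma_plus lam) c d ((c + d) / (2 - lam))"
    using eigvec_perp_iff_geom_vec[OF assms(1,2)] assms(3,4) by blast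
  show ?thesis
  proof (cases "F_A p lam = 0")
    case True
    then have "d = - c"
      using eqs(2) F_A_F_S_no_common_root[OF assms(2)] by (simp add: eq_neg_iff_add_eq_0 add.commute)
    then show ?thesis
      using assms(1) by (simp add: v antisymmetric_geom_vec_iff)
  next
    case False
    then have "d = c"
      using eqs(1) by simp
    then show ?thesis
      using assms(1) by (simp add: v symmetric_geom_vec_iff)
  qed
qed

lemma symmetric_eigvec_perp_iff:
  assumes "p \<ge> 3" "lam > 4"
  shows "(\<exists>v. is_eigvec p v lam \<and> v \<in> E_K_perp p \<and> symmetric_vec p v) \<longleftrightarrow> F_S p lam = 0"
proof
  assume "\<exists>v. is_eigvec p v lam \<and> v \<in> E_K_perp p \<and> symmetric_vec p v"
  then obtain v c d where "symmetric_vec p v" "c \<noteq> 0 \<or> d \<noteq> 0" "(c + d) * F_S p lam = 0"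
    and v: "v = geom_vec p (sigma_plus lam) c d ((c + d) / (2 - lam))"
    using eigvec_perp_iff_geom_vec[OF assms] by blast
  moreover have "d = c"
    using \<open>symmetric_vec p v\<close> assms(1) by (simp add: v symmetric_geom_vec_iff)
  ultimately show "F_S p lam = 0"
    by simp
next
  assume "F_S p lam = 0"
  then have "is_eigvec p (geom_vec p (sigma_plus lam) 1 1 (2 / (2 - lam))) lam
      \<and> geom_vec p (sigma_plus lam) 1 1 (2 / (2 - lam)) \<in> E_K_perp p"
    unfolding eigvec_perp_iff_geom_vec[OF assms]
    by (intro exI[of _ 1]) simp
  moreover have "symmetric_vec p (geom_vec p (sigma_plus lam) 1 1 (2 / (2 - lam)))"
    using assms(1) by (simp add: symmetric_geom_vec_iff)
  ultimately show "\<exists>v. is_eigvec p v lam \<and> v \<in> E_K_perp p \<and> symmetric_vec p v"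
    by blast
qed

lemma antisymmetric_eigvec_perp_iff:
  assumes "p \<ge> 3" "lam > 4"
  shows "(\<exists>v. is_eigvec p v lam \<and> v \<in> E_K_perp p \<and> antisymmetric_vec p v) \<longleftrightarrow> F_A p lam = 0"
proof
  assume "\<exists>v. is_eigvec p v lam \<and> v \<in> E_K_perp p \<and> antisymmetric_vec p v"
  then obtain v c d where "antisymmetric_vec p v" "c \<noteq> 0 \<or> d \<noteq> 0" "(c - d) * F_A p lam = 0"
    and v: "v = geom_vec p (sigma_plus lam) c d ((c + d) / (2 - lam))"
    using eigvec_perp_iff_geom_vec[OF assms] by blast
  moreover have "d = - c"
    using \<open>antisymmetric_vec p v\<close> assms(1) by (simp add: v antisymmetric_geom_vec_iff)
  ultimately show "F_A p lam = 0"
    by simp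
next
  assume "F_A p lam = 0"
  then have "is_eigvec p (geom_vec p (sigma_plus lam) 1 (-1) 0) lam
      \<and> geom_vec p (sigma_plus lam) 1 (-1) 0 \<in> E_K_perp p"
    unfolding eigvec_perp_iff_geom_vec[OF assms]
    by (intro exI[of _ 1] exI[of _ "-1"]) simp
  moreover have "antisymmetric_vec p (geom_vec p (sigma_plus lam) 1 (-1) 0)"
    using assms(1) by (simp add: antisymmetric_geom_vec_iff)
  ultimately show "\<exists>v. is_eigvec p v lam \<and> v \<in> E_K_perp p \<and> antisymmetric_vec p v"
    by blast
qed

theorem proposition11:
  fixes p :: nat
  assumes "p \<ge> 5"
  shows "(\<forall>lam>4. \<forall>v. is_eigvec p v lam \<and> v \<in> E_K_perp p \<longrightarrow>
            symmetric_vec p v \<or> antisymmetric_vec p v)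
       \<and> (\<forall>lam>4. (\<exists>v. is_eigvec p v lam \<and> v \<in> E_K_perp p \<and> symmetric_vec p v)
                  \<longleftrightarrow> F_S p lam = 0)
       \<and> (\<forall>lam>4. (\<exists>v. is_eigvec p v lam \<and> v \<in> E_K_perp p \<and> antisymmetric_vec p v)
                  \<longleftrightarrow> F_A p lam = 0)
       \<and> (\<exists>!lam. lam \<in> {real p<..<real p + 2} \<and> F_A p lam = 0)
       \<and> (\<forall>lam. lam > 4 \<and> (lam \<le> real p \<or> lam \<ge> real p + 2) \<longrightarrow> F_A p lam \<noteq> 0)
       \<and> (\<exists>!lam. lam \<in> {real p<..<real p + 2} \<and> F_S p lam = 0)
       \<and> (\<forall>lam. lam > 4 \<and> (lam \<le> real p \<or> lam \<ge> real p + 2) \<longrightarrow> F_S p lam \<noteq> 0)"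
proof -
  have p: "p \<ge> 3"
    using assms by simp
  show ?thesis
    using eigvec_perp_symmetric_or_antisymmetric[OF p] symmetric_eigvec_perp_iff[OF p]
      antisymmetric_eigvec_perp_iff[OF p] F_A_unique_root_between[OF assms]
      F_A_no_root_outside[OF p] F_S_unique_root_between[OF assms] F_S_no_root_outside
    by blast
qed

end
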